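(* Let $G$ be a graph on $n\ge 1$ vertices. Then there exist disjoint subsets $S,T\subseteq V(G)$ such that $(S,T)$ realizes $\mu(G)$, $|S|\le (n+1)/2$, and $|T|=|S|-1$.
   Context: All graphs are finite and simple. For a graph $G=(V,E)$ on $n$ vertices, a fractional vertex cover is a function $f:V\to[0,\infty)$ with $f(u)+f(v)\ge 1$ for every edge $uv\in E$; $\tau^*(G)$ denotes the minimum of $\sum_{v\in V}f(v)$ over all fractional vertex covers. For $E'\subseteq E$ let $G-E'=(V,E\setminus E')$. Define $\mu(G)=\min\{|E'| : E'\subseteq E,\ \tau^*(G-E')<n/2\}$. For disjoint $S,T\subseteq V$, $E_G(S;V\setminus T)$ is the set of edges with both endpoints in $S$ or with one endpoint in $S$ and the other in $V\setminus(S\cup T)$. It holds that $\mu(G)=\min|E_G(S;V\setminus T)|$ over disjoint $S,T$ with $|S|>|T|$; a pair $(S,T)$ of disjoint subsets with $|S|>|T|$ and $|E_G(S;V\setminus T)|=\mu(G)$ is said to realize $\mu(G)$. *)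

theory Defs
  imports Complex_Main
begin

definition simple_graph :: "'a set \<Rightarrow> 'a set set \<Rightarrow> bool" where
  "simple_graph V E \<longleftrightarrow> finite V \<and> (\<forall>e\<in>E. e \<subseteq> V \<and> card e = 2)"

definition frac_vertex_cover :: "'a set \<Rightarrow> 'a set set \<Rightarrow> ('a \<Rightarrow> real) \<Rightarrow> bool" where
  "frac_vertex_cover V E f \<longleftrightarrow>
     (\<forall>v\<in>V. f v \<ge> 0) \<and> (\<forall>u v. {u, v} \<in> E \<longrightarrow> f u + f v \<ge> 1)"

definition tau_star :: "'a set \<Rightarrow> 'a set set \<Rightarrow> real" where
  "tau_star V E = Inf {(\<Sum>v\<in>V. f v) | f. frac_vertex_cover V E f}"

definition mu :: "'a set \<Rightarrow> 'a set set \<Rightarrow> nat" where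
  "mu V E = (LEAST k. \<exists>E'. E' \<subseteq> E \<and> card E' = k \<and> tau_star V (E - E') < real (card V) / 2)"

definition edges_ST :: "'a set \<Rightarrow> 'a set set \<Rightarrow> 'a set \<Rightarrow> 'a set \<Rightarrow> 'a set set" where
  "edges_ST V E S T = {e \<in> E. e \<subseteq> S \<or>
      (\<exists>u v. e = {u, v} \<and> u \<in> S \<and> v \<in> V - (S \<union> T))}"

definition realizes_mu :: "'a set \<Rightarrow> 'a set set \<Rightarrow> 'a set \<Rightarrow> 'a set \<Rightarrow> bool" where
  "realizes_mu V E S T \<longleftrightarrow> S \<subseteq> V \<and> T \<subseteq> V \<and> S \<inter> T = {} \<and> card S > card T
     \<and> card (edges_ST V E S T) = mu V E"

end

theory Submission
  imports Defs
begin

text \<open>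
  A fractional vertex cover of weight below n/2 can be moved towards the constant 1/2: shifting
  every value by the smallest distance to 1/2 does not increase the weight as long as at least
  as many vertices lie above 1/2 as below, and it creates a new vertex of value 1/2. Eventually
  the set S of vertices below 1/2 is larger than the set T of vertices above 1/2, and the cover
  condition forbids every edge of E(S; V - T). Conversely, a pair (S,T) with |S| > |T| and no such
  edges carries the cover that is 0 on S, 1 on T and 1/2 elsewhere. So mu(G) is the minimum of
  |E(S; V - T)| over such pairs; since E(S; V - T) is monotone in S, a minimizing S can be shrunk
  to |T| + 1 vertices, and then |S| + |T| <= n gives |S| <= (n + 1)/2.
\<close>

definition unbalanced_pair :: "'a set \<Rightarrow> 'a set \<Rightarrow> 'a set \<Rightarrow> bool" where
  "unbalanced_pair V S T \<longleftrightarrow> S \<subseteq> V \<and> T \<subseteq> V \<and> S \<inter> T = {} \<and> card T < card S"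

lemma edges_ST_Diff: "edges_ST V (E - E') S T = edges_ST V E S T - E'"
  unfolding edges_ST_def by blast

lemma edges_ST_subset: "edges_ST V E S T \<subseteq> E"
  unfolding edges_ST_def by blast

lemma edges_ST_mono: "S' \<subseteq> S \<Longrightarrow> edges_ST V E S' T \<subseteq> edges_ST V E S T"
  unfolding edges_ST_def by blast

lemma finite_edges: "simple_graph V E \<Longrightarrow> finite E"
  unfolding simple_graph_def by (meson PowI finite_Pow_iff finite_subset subsetI)

lemma simple_graph_Diff: "simple_graph V E \<Longrightarrow> simple_graph V (E - E')"
  unfolding simple_graph_def by blast

lemma card_edges_ST_mono:
  assumes "simple_graph V E" "S' \<subseteq> S"
  shows "card (edges_ST V E S' T) \<le> card (edges_ST V E S T)"
proof (rule card_mono)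
  show "finite (edges_ST V E S T)"
    using finite_subset[OF edges_ST_subset finite_edges[OF assms(1)]] .
qed (rule edges_ST_mono[OF assms(2)])

lemma unbalanced_pair_card_add_le:
  assumes "finite V" "unbalanced_pair V S T"
  shows "card S + card T \<le> card V"
proof -
  have "finite S" "finite T" "S \<inter> T = {}" "S \<union> T \<subseteq> V"
    using assms unfolding unbalanced_pair_def by (auto intro: finite_subset)
  then show ?thesis
    using card_Un_disjoint card_mono[OF assms(1)] by metis
qed

lemma unbalanced_pair_shrink:
  assumes "unbalanced_pair V S T"
  obtains S' where "S' \<subseteq> S" "card S' = card T + 1" "unbalanced_pair V S' T"
proof -
  have "card T + 1 \<le> card S"
    using assms unfolding unbalanced_pair_def by simp
  then obtain S' where "S' \<subseteq> S" "card S' = card T + 1"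
    by (rule obtain_subset_with_card_n)
  moreover from this assms have "unbalanced_pair V S' T"
    unfolding unbalanced_pair_def by auto
  ultimately show ?thesis
    by (rule that)
qed

lemma tau_star_le:
  assumes "frac_vertex_cover V H f" "finite V"
  shows "tau_star V H \<le> (\<Sum>v\<in>V. f v)"
  unfolding tau_star_def
proof (rule cInf_lower)
  show "bdd_below {\<Sum>v\<in>V. f v | f. frac_vertex_cover V H f}"
    unfolding bdd_below_def frac_vertex_cover_def by (auto intro!: exI[of _ 0] sum_nonneg)
qed (use assms in blast)

lemma tau_star_lessD:
  assumes "tau_star V H < c"
  obtains f where "frac_vertex_cover V H f" "(\<Sum>v\<in>V. f v) < c"
proof -
  have "frac_vertex_cover V H (\<lambda>_. 1)"
    unfolding frac_vertex_cover_def by simp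
  then have "{\<Sum>v\<in>V. f v | f. frac_vertex_cover V H f} \<noteq> {}" by blast
  from cInf_lessD[OF this assms[unfolded tau_star_def]] that show ?thesis by blast
qed

lemma frac_vertex_coverD:
  "frac_vertex_cover V H f \<Longrightarrow> {u, v} \<in> H \<Longrightarrow> 1 \<le> f u + f v"
  unfolding frac_vertex_cover_def by blast

definition toward_half :: "real \<Rightarrow> ('a \<Rightarrow> real) \<Rightarrow> 'a \<Rightarrow> real" where
  "toward_half \<delta> f v = (if f v < 1/2 then f v + \<delta> else if 1/2 < f v then f v - \<delta> else f v)"

lemma frac_vertex_cover_toward_half:
  assumes cover: "frac_vertex_cover V H f" and G: "simple_graph V H"
    and \<delta>: "0 \<le> \<delta>" "\<And>v. v \<in> V \<Longrightarrow> f v \<noteq> 1/2 \<Longrightarrow> \<delta> \<le> \<bar>f v - 1/2\<bar>"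
  shows "frac_vertex_cover V H (toward_half \<delta> f)"
  unfolding frac_vertex_cover_def
proof (intro conjI allI ballI impI)
  fix v assume "v \<in> V"
  then show "0 \<le> toward_half \<delta> f v"
    using cover \<delta> unfolding frac_vertex_cover_def toward_half_def by force
next
  fix u v assume e: "{u, v} \<in> H"
  then have "u \<in> V" "v \<in> V"
    using G unfolding simple_graph_def by auto
  moreover have "1 \<le> f u + f v"
    using frac_vertex_coverD[OF cover e] .
  ultimately show "1 \<le> toward_half \<delta> f u + toward_half \<delta> f v"
    using \<delta>(2)[of u] \<delta>(2)[of v] unfolding toward_half_def by (auto split: if_splits)
qed

lemma sum_toward_half:
  assumes "finite V"
  shows "(\<Sum>v\<in>V. toward_half \<delta> f v) =
    (\<Sum>v\<in>V. f v) + \<delta> * (card {v\<in>V. f v < 1/2} - real (card {v\<in>V. 1/2 < f v}))"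
proof -
  have "toward_half \<delta> f v = f v + \<delta> * of_bool (f v < 1/2) - \<delta> * of_bool (1/2 < f v)" for v
    unfolding toward_half_def by simp
  then have "(\<Sum>v\<in>V. toward_half \<delta> f v) =
      (\<Sum>v\<in>V. f v) + \<delta> * (\<Sum>v\<in>V. of_bool (f v < 1/2)) - \<delta> * (\<Sum>v\<in>V. of_bool (1/2 < f v))"
    by (simp add: sum.distrib sum_subtractf sum_distrib_left)
  with assms show ?thesis
    by (simp add: Int_def algebra_simps)
qed

lemma cover_closer_to_half:
  assumes G: "simple_graph V H" and cover: "frac_vertex_cover V H f"
    and weight: "(\<Sum>v\<in>V. f v) < card V / 2"
    and more_high: "card {v\<in>V. f v < 1/2} \<le> card {v\<in>V. 1/2 < f v}"
  obtains g where "frac_vertex_cover V H g" "(\<Sum>v\<in>V. g v) < card V / 2"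
    "{v\<in>V. g v \<noteq> 1/2} \<subset> {v\<in>V. f v \<noteq> 1/2}"
proof -
  define N where "N = {v\<in>V. f v \<noteq> 1/2}"
  have fin: "finite V" "finite N"
    using G unfolding simple_graph_def N_def by auto
  have "N \<noteq> {}"
  proof
    assume "N = {}"
    then have "(\<Sum>v\<in>V. f v) = (\<Sum>v\<in>V. 1/2)"
      unfolding N_def by (intro sum.cong) auto
    with weight show False by simp
  qed
  define \<delta> where "\<delta> = Min ((\<lambda>v. \<bar>f v - 1/2\<bar>) ` N)"
  have "\<delta> \<in> (\<lambda>v. \<bar>f v - 1/2\<bar>) ` N"
    unfolding \<delta>_def using fin \<open>N \<noteq> {}\<close> by (intro Min_in) auto
  then obtain w where w: "w \<in> N" "\<bar>f w - 1/2\<bar> = \<delta>"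
    by blast
  have \<delta>_le: "\<And>v. v \<in> V \<Longrightarrow> f v \<noteq> 1/2 \<Longrightarrow> \<delta> \<le> \<bar>f v - 1/2\<bar>"
    unfolding \<delta>_def N_def using fin by auto
  have "0 < \<delta>"
    using w unfolding N_def by auto
  show ?thesis
  proof
    show "frac_vertex_cover V H (toward_half \<delta> f)"
      using frac_vertex_cover_toward_half[OF cover G] \<open>0 < \<delta>\<close> \<delta>_le by simp
    have "\<delta> * (card {v\<in>V. f v < 1/2} - real (card {v\<in>V. 1/2 < f v})) \<le> 0"
      using more_high \<open>0 < \<delta>\<close> by (simp add: mult_nonneg_nonpos)
    then show "(\<Sum>v\<in>V. toward_half \<delta> f v) < card V / 2"
      using sum_toward_half[OF fin(1), of \<delta> f] weight by linarith
    have "toward_half \<delta> f w = 1/2"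
      using w unfolding toward_half_def by (auto simp: abs_if)
    moreover have "{v\<in>V. toward_half \<delta> f v \<noteq> 1/2} \<subseteq> {v\<in>V. f v \<noteq> 1/2}"
      unfolding toward_half_def by auto
    ultimately show "{v\<in>V. toward_half \<delta> f v \<noteq> 1/2} \<subset> {v\<in>V. f v \<noteq> 1/2}"
      using w(1) unfolding N_def by blast
  qed
qed

lemma unbalanced_pair_if_cover_less_half:
  assumes G: "simple_graph V H" and "frac_vertex_cover V H f" "(\<Sum>v\<in>V. f v) < card V / 2"
  obtains S T where "unbalanced_pair V S T" "edges_ST V H S T = {}"
  using assms(2,3)
proof (induction "card {v\<in>V. f v \<noteq> 1/2}" arbitrary: f rule: less_induct)
  case less
  define L where "L = {v\<in>V. f v < 1/2}"
  define U where "U = {v\<in>V. 1/2 < f v}"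
  show ?case
  proof (cases "card U < card L")
    case True
    have "e \<notin> edges_ST V H L U" for e
    proof
      assume e: "e \<in> edges_ST V H L U"
      then have "e \<in> H"
        unfolding edges_ST_def by blast
      then obtain u v where uv: "e = {u, v}"
        using G unfolding simple_graph_def by (meson card_2_iff)
      have "1 \<le> f u + f v"
        using frac_vertex_coverD[OF less.prems(2)] \<open>e \<in> H\<close> uv by blast
      moreover have "e \<subseteq> L \<union> (V - (L \<union> U))" "e \<inter> L \<noteq> {}"
        using e uv unfolding edges_ST_def by blast+
      ultimately show False
        using uv unfolding L_def U_def by auto
    qed
    then have "edges_ST V H L U = {}"
      by blast
    moreover have "unbalanced_pair V L U"
      using True unfolding unbalanced_pair_def L_def U_def by auto
    ultimately show ?thesis
      using less.prems(1) by blast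
  next
    case False
    then obtain g where g: "frac_vertex_cover V H g" "(\<Sum>v\<in>V. g v) < card V / 2"
        "{v\<in>V. g v \<noteq> 1/2} \<subset> {v\<in>V. f v \<noteq> 1/2}"
      using cover_closer_to_half[OF G less.prems(2,3)] unfolding L_def U_def by auto
    moreover have "finite {v\<in>V. f v \<noteq> 1/2}"
      using G unfolding simple_graph_def by simp
    ultimately have "card {v\<in>V. g v \<noteq> 1/2} < card {v\<in>V. f v \<noteq> 1/2}"
      by (simp add: psubset_card_mono)
    from less.hyps[OF this less.prems(1) g(1,2)] show ?thesis .
  qed
qed

lemma tau_star_less_half_if_unbalanced_pair:
  assumes G: "simple_graph V H" and ST: "unbalanced_pair V S T" "edges_ST V H S T = {}"
  shows "tau_star V H < card V / 2"
proof -
  define f where "f v = (1 - of_bool (v \<in> S) + of_bool (v \<in> T)) / (2::real)" for v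
  have fin: "finite V" "finite S" "finite T"
    using G ST(1) unfolding simple_graph_def unbalanced_pair_def by (auto intro: finite_subset)
  have "frac_vertex_cover V H f"
    unfolding frac_vertex_cover_def
  proof (intro conjI allI ballI impI)
    fix v show "0 \<le> f v"
      unfolding f_def by simp
  next
    fix u v assume e: "{u, v} \<in> H"
    then have "u \<in> V" "v \<in> V"
      using G unfolding simple_graph_def by auto
    moreover have "{u, v} \<notin> edges_ST V H S T" "{v, u} \<notin> edges_ST V H S T"
      using ST(2) by auto
    ultimately have "u \<in> S \<Longrightarrow> v \<in> T" "v \<in> S \<Longrightarrow> u \<in> T"
      using e unfolding edges_ST_def by (auto simp: insert_commute)
    then show "1 \<le> f u + f v"
      using ST(1) unfolding f_def unbalanced_pair_def by auto
  qed
  moreover have "(\<Sum>v\<in>V. f v) = (card V - real (card S) + card T) / 2"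
    using fin ST(1) unfolding f_def unbalanced_pair_def
    by (simp add: sum_divide_distrib[symmetric] sum.distrib sum_subtractf Int_absorb1 Int_absorb2)
  ultimately show ?thesis
    using tau_star_le[of V H f] fin ST(1) unfolding unbalanced_pair_def by simp
qed

lemma tau_star_Diff_edges_ST_less_half:
  assumes "simple_graph V E" "unbalanced_pair V S T"
  shows "tau_star V (E - edges_ST V E S T) < card V / 2"
  using assms by (intro tau_star_less_half_if_unbalanced_pair) (auto simp: simple_graph_Diff edges_ST_Diff)

lemma mu_le_edges_ST:
  assumes "simple_graph V E" "unbalanced_pair V S T"
  shows "mu V E \<le> card (edges_ST V E S T)"
  unfolding mu_def
  by (rule Least_le, intro exI[of _ "edges_ST V E S T"] conjI edges_ST_subset refl
      tau_star_Diff_edges_ST_less_half[OF assms])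

lemma unbalanced_pair_edges_ST_le_mu:
  assumes G: "simple_graph V E" and "V \<noteq> {}"
  obtains S T where "unbalanced_pair V S T" "card (edges_ST V E S T) \<le> mu V E"
proof -
  define P where "P k \<longleftrightarrow> (\<exists>E'. E' \<subseteq> E \<and> card E' = k \<and> tau_star V (E - E') < card V / 2)" for k
  obtain v where "unbalanced_pair V {v} {}"
    using \<open>V \<noteq> {}\<close> unfolding unbalanced_pair_def by auto
  then have "P (card (edges_ST V E {v} {}))"
    unfolding P_def using edges_ST_subset tau_star_Diff_edges_ST_less_half[OF G]
    by (intro exI[of _ "edges_ST V E {v} {}"]) simp
  moreover have "mu V E = (LEAST k. P k)"
    unfolding mu_def P_def ..
  ultimately have "P (mu V E)"
    by (simp add: LeastI)
  then obtain E' where E': "E' \<subseteq> E" "card E' = mu V E" "tau_star V (E - E') < card V / 2"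
    unfolding P_def by blast
  obtain f where "frac_vertex_cover V (E - E') f" "(\<Sum>v\<in>V. f v) < card V / 2"
    using tau_star_lessD[OF E'(3)] .
  then obtain S T where ST: "unbalanced_pair V S T" "edges_ST V (E - E') S T = {}"
    using unbalanced_pair_if_cover_less_half[OF simple_graph_Diff[OF G]] by blast
  then have "edges_ST V E S T \<subseteq> E'"
    unfolding edges_ST_Diff by blast
  moreover have "finite E'"
    using E'(1) finite_edges[OF G] by (rule finite_subset)
  ultimately have "card (edges_ST V E S T) \<le> mu V E"
    using E'(2) card_mono by metis
  with ST(1) show ?thesis
    by (rule that)
qed

theorem lemma16:
  fixes V :: "'a set" and E :: "'a set set"
  assumes "simple_graph V E" and "card V \<ge> 1"
  shows "\<exists>S T. realizes_mu V E S T \<and> real (card S) \<le> (real (card V) + 1) / 2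
              \<and> card T = card S - 1"
proof -
  have "V \<noteq> {}" and fin: "finite V"
    using assms unfolding simple_graph_def by auto
  then obtain S0 T where ST0: "unbalanced_pair V S0 T" "card (edges_ST V E S0 T) \<le> mu V E"
    using unbalanced_pair_edges_ST_le_mu[OF assms(1)] by blast
  obtain S where S: "S \<subseteq> S0" "card S = card T + 1" "unbalanced_pair V S T"
    using ST0(1) by (rule unbalanced_pair_shrink)
  have "card (edges_ST V E S T) \<le> mu V E"
    using card_edges_ST_mono[OF assms(1) S(1), of T] ST0(2) by linarith
  with S(3) have "realizes_mu V E S T"
    using mu_le_edges_ST[OF assms(1) S(3)] unfolding realizes_mu_def unbalanced_pair_def by simp
  moreover have "card S + card T \<le> card V"
    using unbalanced_pair_card_add_le[OF fin S(3)] .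
  ultimately show ?thesis
    using S(2) by (intro exI[of _ S] exI[of _ T]) auto
qed

end
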